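(* For every integer $k\geq 3$, there exists a bridgeless cubic graph $G$ such that $\mu_3(G)=k$.
   Context: A 1-factor is a spanning 1-regular subgraph. $\mu_3(G)$ is the minimum, over all lists (with possible repetition) of three 1-factors of $G$, of the number of edges of $G$ contained in none of them. *)

theory Defs
  imports Main
begin

definition graph :: "'a set \<Rightarrow> 'a set set \<Rightarrow> bool" where
  "graph V E \<longleftrightarrow> finite V \<and> (\<forall>e\<in>E. e \<subseteq> V \<and> card e = 2)"

definition degree :: "'a set set \<Rightarrow> 'a \<Rightarrow> nat" where
  "degree E v = card {e\<in>E. v \<in> e}"

definition cubic :: "'a set \<Rightarrow> 'a set set \<Rightarrow> bool" where
  "cubic V E \<longleftrightarrow> graph V E \<and> (\<forall>v\<in>V. degree E v = 3)"

definition adj :: "'a set set \<Rightarrow> 'a \<Rightarrow> 'a \<Rightarrow> bool" where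
  "adj E u v \<longleftrightarrow> {u, v} \<in> E"

definition connected_in :: "'a set set \<Rightarrow> 'a \<Rightarrow> 'a \<Rightarrow> bool" where
  "connected_in E u v \<longleftrightarrow> (adj E)\<^sup>*\<^sup>* u v"

definition is_bridge :: "'a set set \<Rightarrow> 'a set \<Rightarrow> bool" where
  "is_bridge E e \<longleftrightarrow> e \<in> E \<and> (\<exists>u v. e = {u, v} \<and> \<not> connected_in (E - {e}) u v)"

definition bridgeless :: "'a set set \<Rightarrow> bool" where
  "bridgeless E \<longleftrightarrow> (\<forall>e\<in>E. \<not> is_bridge E e)"

definition one_factor :: "'a set \<Rightarrow> 'a set set \<Rightarrow> 'a set set \<Rightarrow> bool" where
  "one_factor V E F \<longleftrightarrow> F \<subseteq> E \<and> (\<forall>v\<in>V. degree F v = 1)"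

definition mu3 :: "'a set \<Rightarrow> 'a set set \<Rightarrow> nat" where
  "mu3 V E = (LEAST n. \<exists>F1 F2 F3. one_factor V E F1 \<and> one_factor V E F2 \<and> one_factor V E F3
                 \<and> n = card (E - (F1 \<union> F2 \<union> F3)))"

end

theory Submission
  imports Defs
begin

text \<open>
  If two cubic graphs are disjoint, the 1-factors of their union are exactly the unions of
  1-factors of the parts, so \<open>\<mu>\<^sub>3\<close> is additive, and disjoint unions of bridgeless cubic graphs
  are bridgeless cubic. It therefore suffices to realise \<open>\<mu>\<^sub>3\<close> = 3, 4, 5, and every
  \<open>k \<ge> 3\<close> is a sum of these. The three base graphs are checked by computation: their
  1-factors are enumerated exhaustively, so the minimum over all triples is verified directly.
\<close>

lemma adj_commute: "adj E x y = adj E y x"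
  by (simp add: adj_def insert_commute)

lemma connected_in_sym: "connected_in E x y \<Longrightarrow> connected_in E y x"
  unfolding connected_in_def
proof (induction rule: rtranclp_induct)
  case (step y z)
  then have "adj E z y" by (simp add: adj_commute)
  from this step.IH show ?case by (rule converse_rtranclp_into_rtranclp)
qed simp

lemma connected_in_mono: "connected_in A x y \<Longrightarrow> A \<subseteq> B \<Longrightarrow> connected_in B x y"
  unfolding connected_in_def
proof (induction rule: rtranclp_induct)
  case (step y z)
  then have "adj B y z" by (auto simp: adj_def)
  with step show ?case by (meson rtranclp.rtrancl_into_rtrancl)
qed simp

lemma connected_in_image: "connected_in E x y \<Longrightarrow> connected_in (image f ` E) (f x) (f y)"
  unfolding connected_in_def
proof (induction rule: rtranclp_induct)
  case (step y z)
  then have "f ` {y, z} \<in> image f ` E" unfolding adj_def by blast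
  then have "adj (image f ` E) (f y) (f z)" unfolding adj_def by simp
  with step show ?case by (meson rtranclp.rtrancl_into_rtrancl)
qed simp

lemma graph_finite_edges: "graph V E \<Longrightarrow> finite E"
  unfolding graph_def by (meson Pow_iff finite_Pow_iff finite_subset subsetI)

lemma graph_Un: "graph V1 E1 \<Longrightarrow> graph V2 E2 \<Longrightarrow> graph (V1 \<union> V2) (E1 \<union> E2)"
  by (auto simp: graph_def)

lemma degree_Un_avoiding:
  assumes "\<forall>e\<in>E2. v \<notin> e"
  shows "degree (E1 \<union> E2) v = degree E1 v"
proof -
  have "{e \<in> E1 \<union> E2. v \<in> e} = {e \<in> E1. v \<in> e}" using assms by blast
  then show ?thesis by (simp add: degree_def)
qed

abbreviation uncovered :: "'a set set \<Rightarrow> 'a set set \<Rightarrow> 'a set set \<Rightarrow> 'a set set \<Rightarrow> nat" where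
  "uncovered E F1 F2 F3 \<equiv> card (E - (F1 \<union> F2 \<union> F3))"

definition is_mu3 :: "'a set \<Rightarrow> 'a set set \<Rightarrow> nat \<Rightarrow> bool" where
  "is_mu3 V E k \<longleftrightarrow>
    (\<exists>F1 F2 F3. one_factor V E F1 \<and> one_factor V E F2 \<and> one_factor V E F3 \<and> uncovered E F1 F2 F3 = k)
  \<and> (\<forall>F1 F2 F3. one_factor V E F1 \<and> one_factor V E F2 \<and> one_factor V E F3 \<longrightarrow> k \<le> uncovered E F1 F2 F3)"

lemma mu3_eqI: "is_mu3 V E k \<Longrightarrow> mu3 V E = k"
  unfolding is_mu3_def mu3_def by (rule Least_equality) auto

locale disjoint_graphs =
  fixes V1 :: "'a set" and E1 and V2 and E2
  assumes graph1: "graph V1 E1" and graph2: "graph V2 E2" and disjoint: "V1 \<inter> V2 = {}"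
begin

lemma edges_disjoint: "E1 \<inter> E2 = {}"
proof -
  have "e = {}" if "e \<in> E1" "e \<in> E2" for e
    using graph1 graph2 disjoint that unfolding graph_def by blast
  moreover have "e \<noteq> {}" if "e \<in> E1" for e
    using graph1 that unfolding graph_def by fastforce
  ultimately show ?thesis by blast
qed

lemma V1_avoids_edges2: "v \<in> V1 \<Longrightarrow> \<forall>e\<in>E2. v \<notin> e"
  using graph2 disjoint unfolding graph_def by blast

lemma degree_Int1:
  assumes "v \<in> V1" "F \<subseteq> E1 \<union> E2"
  shows "degree F v = degree (F \<inter> E1) v"
proof -
  have "F = (F \<inter> E1) \<union> (F \<inter> E2)" using assms(2) by blast
  then show ?thesis using degree_Un_avoiding[of "F \<inter> E2" v "F \<inter> E1"] V1_avoids_edges2[OF assms(1)] by simp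
qed

lemma swap: "disjoint_graphs V2 E2 V1 E1"
  using graph1 graph2 disjoint by unfold_locales auto

lemma degree_Int2: "v \<in> V2 \<Longrightarrow> F \<subseteq> E1 \<union> E2 \<Longrightarrow> degree F v = degree (F \<inter> E2) v"
  using disjoint_graphs.degree_Int1[OF swap] by (simp add: Un_commute)

lemma cubic_Un:
  assumes "cubic V1 E1" "cubic V2 E2"
  shows "cubic (V1 \<union> V2) (E1 \<union> E2)"
proof -
  have "degree (E1 \<union> E2) v = 3" if "v \<in> V1 \<union> V2" for v
  proof (cases "v \<in> V1")
    case True
    then have "degree (E1 \<union> E2) v = degree E1 v" using degree_Int1[of v "E1 \<union> E2"] by (simp add: Int_absorb2)
    with True assms(1) show ?thesis by (simp add: cubic_def)
  next
    case False
    then have "v \<in> V2" "degree (E1 \<union> E2) v = degree E2 v"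
      using that degree_Int2[of v "E1 \<union> E2"] by (auto simp: Int_absorb2)
    with assms(2) show ?thesis by (simp add: cubic_def)
  qed
  then show ?thesis using graph_Un[OF graph1 graph2] by (simp add: cubic_def)
qed

lemma one_factor_Int1:
  assumes "one_factor (V1 \<union> V2) (E1 \<union> E2) F"
  shows "one_factor V1 E1 (F \<inter> E1)"
proof -
  have "F \<subseteq> E1 \<union> E2" using assms by (simp add: one_factor_def)
  then have "degree (F \<inter> E1) v = 1" if "v \<in> V1" for v
    using that degree_Int1[of v F] assms by (simp add: one_factor_def)
  then show ?thesis by (simp add: one_factor_def)
qed

lemma one_factor_Int2:
  assumes "one_factor (V1 \<union> V2) (E1 \<union> E2) F"
  shows "one_factor V2 E2 (F \<inter> E2)"
proof -
  have "F \<subseteq> E1 \<union> E2" using assms by (simp add: one_factor_def)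
  then have "degree (F \<inter> E2) v = 1" if "v \<in> V2" for v
    using that degree_Int2[of v F] assms by (simp add: one_factor_def)
  then show ?thesis by (simp add: one_factor_def)
qed

lemma one_factor_Un:
  assumes A: "one_factor V1 E1 A" and B: "one_factor V2 E2 B"
  shows "one_factor (V1 \<union> V2) (E1 \<union> E2) (A \<union> B)"
proof -
  have sub: "A \<subseteq> E1" "B \<subseteq> E2" using A B by (auto simp: one_factor_def)
  then have restrict: "(A \<union> B) \<inter> E1 = A" "(A \<union> B) \<inter> E2 = B" using edges_disjoint by blast+
  have "degree (A \<union> B) v = 1" if "v \<in> V1 \<union> V2" for v
  proof (cases "v \<in> V1")
    case True
    then have "degree (A \<union> B) v = degree A v" using degree_Int1[of v "A \<union> B"] sub restrict(1) by auto
    with True A show ?thesis by (simp add: one_factor_def)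
  next
    case False
    then have "v \<in> V2" using that by blast
    then have "degree (A \<union> B) v = degree B v" using degree_Int2[of v "A \<union> B"] sub restrict(2) by auto
    with \<open>v \<in> V2\<close> B show ?thesis by (simp add: one_factor_def)
  qed
  with sub show ?thesis unfolding one_factor_def by blast
qed

lemma uncovered_Un:
  assumes "A1 \<subseteq> E1" "A2 \<subseteq> E1" "A3 \<subseteq> E1" "B1 \<subseteq> E2" "B2 \<subseteq> E2" "B3 \<subseteq> E2"
  shows "uncovered (E1 \<union> E2) (A1 \<union> B1) (A2 \<union> B2) (A3 \<union> B3)
       = uncovered E1 A1 A2 A3 + uncovered E2 B1 B2 B3"
proof -
  have "(E1 \<union> E2) - ((A1 \<union> B1) \<union> (A2 \<union> B2) \<union> (A3 \<union> B3))
      = (E1 - (A1 \<union> A2 \<union> A3)) \<union> (E2 - (B1 \<union> B2 \<union> B3))"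
    using edges_disjoint assms by blast
  moreover have "(E1 - (A1 \<union> A2 \<union> A3)) \<inter> (E2 - (B1 \<union> B2 \<union> B3)) = {}"
    using edges_disjoint by blast
  ultimately show ?thesis
    using graph_finite_edges[OF graph1] graph_finite_edges[OF graph2] by (simp add: card_Un_disjoint)
qed

lemma is_mu3_Un:
  assumes m1: "is_mu3 V1 E1 k1" and m2: "is_mu3 V2 E2 k2"
  shows "is_mu3 (V1 \<union> V2) (E1 \<union> E2) (k1 + k2)"
  unfolding is_mu3_def
proof (intro conjI allI impI)
  from m1 obtain A1 A2 A3 where A: "one_factor V1 E1 A1" "one_factor V1 E1 A2" "one_factor V1 E1 A3"
      "uncovered E1 A1 A2 A3 = k1" unfolding is_mu3_def by blast
  from m2 obtain B1 B2 B3 where B: "one_factor V2 E2 B1" "one_factor V2 E2 B2" "one_factor V2 E2 B3"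
      "uncovered E2 B1 B2 B3 = k2" unfolding is_mu3_def by blast
  show "\<exists>F1 F2 F3. one_factor (V1 \<union> V2) (E1 \<union> E2) F1 \<and> one_factor (V1 \<union> V2) (E1 \<union> E2) F2
      \<and> one_factor (V1 \<union> V2) (E1 \<union> E2) F3 \<and> uncovered (E1 \<union> E2) F1 F2 F3 = k1 + k2"
  proof (intro exI conjI)
    show "one_factor (V1 \<union> V2) (E1 \<union> E2) (A1 \<union> B1)" "one_factor (V1 \<union> V2) (E1 \<union> E2) (A2 \<union> B2)"
      "one_factor (V1 \<union> V2) (E1 \<union> E2) (A3 \<union> B3)"
      using one_factor_Un A B by blast+
    show "uncovered (E1 \<union> E2) (A1 \<union> B1) (A2 \<union> B2) (A3 \<union> B3) = k1 + k2"
      using uncovered_Un[of A1 A2 A3 B1 B2 B3] A B by (simp add: one_factor_def)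
  qed
next
  fix F1 F2 F3
  assume "one_factor (V1 \<union> V2) (E1 \<union> E2) F1 \<and> one_factor (V1 \<union> V2) (E1 \<union> E2) F2
      \<and> one_factor (V1 \<union> V2) (E1 \<union> E2) F3"
  then have F: "one_factor (V1 \<union> V2) (E1 \<union> E2) F1" "one_factor (V1 \<union> V2) (E1 \<union> E2) F2"
      "one_factor (V1 \<union> V2) (E1 \<union> E2) F3" by auto
  have split: "(F \<inter> E1) \<union> (F \<inter> E2) = F" if "one_factor (V1 \<union> V2) (E1 \<union> E2) F" for F
    using that unfolding one_factor_def by blast
  have "k1 + k2 \<le> uncovered E1 (F1 \<inter> E1) (F2 \<inter> E1) (F3 \<inter> E1) + uncovered E2 (F1 \<inter> E2) (F2 \<inter> E2) (F3 \<inter> E2)"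
    using m1 m2 F one_factor_Int1 one_factor_Int2 unfolding is_mu3_def by (meson add_le_mono)
  also have "\<dots> = uncovered (E1 \<union> E2) F1 F2 F3"
    using uncovered_Un[of "F1 \<inter> E1" "F2 \<inter> E1" "F3 \<inter> E1" "F1 \<inter> E2" "F2 \<inter> E2" "F3 \<inter> E2"]
      split[OF F(1)] split[OF F(2)] split[OF F(3)] by simp
  finally show "k1 + k2 \<le> uncovered (E1 \<union> E2) F1 F2 F3" .
qed

end

lemma bridgeless_Un:
  assumes "bridgeless E1" "bridgeless E2"
  shows "bridgeless (E1 \<union> E2)"
  unfolding bridgeless_def is_bridge_def
proof (intro ballI notI)
  fix e assume "e \<in> E1 \<union> E2"
    and "e \<in> E1 \<union> E2 \<and> (\<exists>u v. e = {u, v} \<and> \<not> connected_in (E1 \<union> E2 - {e}) u v)"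
  then obtain u v where uv: "e = {u, v}" "\<not> connected_in (E1 \<union> E2 - {e}) u v" by blast
  have "connected_in (E1 - {e}) u v \<or> connected_in (E2 - {e}) u v"
    using assms \<open>e \<in> E1 \<union> E2\<close> uv(1) unfolding bridgeless_def is_bridge_def by blast
  moreover have "E1 - {e} \<subseteq> E1 \<union> E2 - {e}" "E2 - {e} \<subseteq> E1 \<union> E2 - {e}" by blast+
  ultimately show False using uv(2) connected_in_mono by metis
qed

lemma inj_imp_inj_image: "inj f \<Longrightarrow> inj (image f)"
  by (simp add: inj_def inj_image_eq_iff)

context
  fixes f :: "'a \<Rightarrow> 'b"
  assumes inj: "inj f"
begin

lemma degree_image: "degree (image f ` F) (f v) = degree F v"
proof -
  have "{e \<in> image f ` F. f v \<in> e} = image f ` {e \<in> F. v \<in> e}"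
    using inj_image_mem_iff[OF inj] by blast
  moreover have "inj_on (image f) {e \<in> F. v \<in> e}"
    using inj_imp_inj_image[OF inj] by (simp add: inj_on_def inj_def)
  ultimately show ?thesis unfolding degree_def by (simp add: card_image)
qed

lemma graph_image:
  assumes "graph V E"
  shows "graph (f ` V) (image f ` E)"
  unfolding graph_def
proof (intro conjI ballI)
  show "finite (f ` V)" using assms by (simp add: graph_def)
  fix e' assume "e' \<in> image f ` E"
  then obtain e where e: "e \<in> E" "e' = f ` e" by blast
  have "e \<subseteq> V" "card e = 2" using assms e(1) by (auto simp: graph_def)
  moreover have "card (f ` e) = card e" using inj by (simp add: card_image inj_on_subset)
  ultimately show "e' \<subseteq> f ` V" "card e' = 2" using e(2) by auto
qed

lemma cubic_image: "cubic V E \<Longrightarrow> cubic (f ` V) (image f ` E)"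
  using graph_image degree_image unfolding cubic_def by auto

lemma bridgeless_image:
  assumes "bridgeless E"
  shows "bridgeless (image f ` E)"
  unfolding bridgeless_def is_bridge_def
proof (intro ballI notI)
  fix e' assume "e' \<in> image f ` E"
    and "e' \<in> image f ` E \<and> (\<exists>u' v'. e' = {u', v'} \<and> \<not> connected_in (image f ` E - {e'}) u' v')"
  then obtain e u' v' where e: "e \<in> E" "e' = f ` e" and e': "e' = {u', v'}"
    and not_connected: "\<not> connected_in (image f ` E - {e'}) u' v'" by blast
  obtain u where u: "u \<in> e" "u' = f u" using e e' by (metis imageE insertI1)
  obtain v where v: "v \<in> e" "v' = f v" using e e' by (metis imageE insertI1 insert_commute)
  have "f ` e = f ` {u, v}" using e e' u v by simp
  then have "e = {u, v}" by (simp only: inj_image_eq_iff[OF inj])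
  then have "connected_in (E - {e}) u v" using assms e(1) unfolding bridgeless_def is_bridge_def by blast
  then have "connected_in (image f ` (E - {e})) u' v'" using connected_in_image u v by metis
  moreover have "image f ` (E - {e}) = image f ` E - {e'}"
    using inj_imp_inj_image[OF inj] e by (simp add: image_set_diff)
  ultimately show False using not_connected by simp
qed

lemma one_factor_image: "one_factor V E F \<Longrightarrow> one_factor (f ` V) (image f ` E) (image f ` F)"
  using degree_image unfolding one_factor_def by auto

lemma one_factor_image_inv:
  assumes "one_factor (f ` V) (image f ` E) F'"
  obtains F where "F' = image f ` F" "one_factor V E F"
proof
  define F where "F = {e \<in> E. f ` e \<in> F'}"
  show F': "F' = image f ` F" using assms unfolding F_def one_factor_def by auto
  show "one_factor V E F"
    using assms degree_image unfolding one_factor_def F' by (auto simp: F_def)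
qed

lemma uncovered_image: "uncovered (image f ` E) (image f ` F1) (image f ` F2) (image f ` F3) = uncovered E F1 F2 F3"
proof -
  have "inj (image f)" by (rule inj_imp_inj_image[OF inj])
  then show ?thesis
    by (simp add: image_set_diff[symmetric] image_Un[symmetric] card_image inj_on_subset)
qed

lemma is_mu3_image:
  assumes "is_mu3 V E k"
  shows "is_mu3 (f ` V) (image f ` E) k"
  unfolding is_mu3_def
proof (intro conjI allI impI)
  show "\<exists>F1 F2 F3. one_factor (f ` V) (image f ` E) F1 \<and> one_factor (f ` V) (image f ` E) F2
      \<and> one_factor (f ` V) (image f ` E) F3 \<and> uncovered (image f ` E) F1 F2 F3 = k"
    using assms one_factor_image uncovered_image unfolding is_mu3_def by metis
next
  fix F1' F2' F3'
  assume "one_factor (f ` V) (image f ` E) F1' \<and> one_factor (f ` V) (image f ` E) F2'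
      \<and> one_factor (f ` V) (image f ` E) F3'"
  then obtain F1 F2 F3 where "F1' = image f ` F1" "F2' = image f ` F2" "F3' = image f ` F3"
      "one_factor V E F1" "one_factor V E F2" "one_factor V E F3"
    using one_factor_image_inv by metis
  then show "k \<le> uncovered (image f ` E) F1' F2' F3'"
    using assms uncovered_image unfolding is_mu3_def by simp
qed

end

definition mu3_realizable :: "nat \<Rightarrow> bool" where
  "mu3_realizable k \<longleftrightarrow> (\<exists>(V :: nat set) E. cubic V E \<and> bridgeless E \<and> is_mu3 V E k)"

lemma mu3_realizable_add:
  assumes "mu3_realizable a" "mu3_realizable b"
  shows "mu3_realizable (a + b)"
proof -
  obtain V1 :: "nat set" and E1 where G1: "cubic V1 E1" "bridgeless E1" "is_mu3 V1 E1 a"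
    using assms(1) unfolding mu3_realizable_def by blast
  obtain V2 :: "nat set" and E2 where G2: "cubic V2 E2" "bridgeless E2" "is_mu3 V2 E2 b"
    using assms(2) unfolding mu3_realizable_def by blast
  define shift where "shift = (\<lambda>x. x + Suc (Max (V1 \<union> {0})))"
  have inj: "inj shift" by (simp add: shift_def inj_def)
  have "finite V1" using G1(1) by (simp add: cubic_def graph_def)
  then have "x < Suc (Max (V1 \<union> {0}))" if "x \<in> V1" for x
    using that by (simp add: le_imp_less_Suc)
  then have "V1 \<inter> shift ` V2 = {}" unfolding shift_def by fastforce
  then interpret disjoint_graphs V1 E1 "shift ` V2" "image shift ` E2"
    using G1(1) cubic_image[OF inj G2(1)] by unfold_locales (auto simp: cubic_def)
  show ?thesis unfolding mu3_realizable_def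
    using cubic_Un[OF G1(1) cubic_image[OF inj G2(1)]]
      bridgeless_Un[OF G1(2) bridgeless_image[OF inj G2(2)]]
      is_mu3_Un[OF G1(3) is_mu3_image[OF inj G2(3)]] by blast
qed

definition edge_of :: "'a \<times> 'a \<Rightarrow> 'a set" where
  "edge_of p = {fst p, snd p}"

definition list_degree :: "('a \<times> 'a) list \<Rightarrow> 'a \<Rightarrow> nat" where
  "list_degree es v = length (filter (\<lambda>p. fst p = v \<or> snd p = v) es)"

definition simple_edge_list :: "('a::order \<times> 'a) list \<Rightarrow> 'a list \<Rightarrow> bool" where
  "simple_edge_list es vs \<longleftrightarrow> distinct vs \<and> distinct es
     \<and> (\<forall>p\<in>set es. fst p < snd p \<and> fst p \<in> set vs \<and> snd p \<in> set vs)"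

lemma inj_on_edge_of: "\<forall>p\<in>S. fst p < snd p \<Longrightarrow> inj_on edge_of (S :: ('a::order \<times> 'a) set)"
proof (rule inj_onI)
  fix p q
  assume "\<forall>p\<in>S. fst p < snd p" "p \<in> S" "q \<in> S" "edge_of p = edge_of q"
  then have "fst p < snd p" "fst q < snd q" "{fst p, snd p} = {fst q, snd q}" by (auto simp: edge_of_def)
  then show "p = q" by (cases p; cases q) (auto simp: doubleton_eq_iff)
qed

lemma degree_edge_of:
  fixes es :: "('a::order \<times> 'a) list"
  assumes "\<forall>p\<in>set es. fst p < snd p" "distinct es"
  shows "degree (edge_of ` set es) v = list_degree es v"
proof -
  let ?S = "set (filter (\<lambda>p. fst p = v \<or> snd p = v) es)"
  have "{e \<in> edge_of ` set es. v \<in> e} = edge_of ` ?S"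
    by (auto simp: edge_of_def)
  moreover have "inj_on edge_of ?S"
    using inj_on_edge_of[of ?S] assms(1) by simp
  moreover have "card ?S = list_degree es v"
    unfolding list_degree_def by (rule distinct_card) (simp add: assms(2))
  ultimately show ?thesis unfolding degree_def by (simp add: card_image)
qed

lemma graph_of_simple_edge_list: "simple_edge_list es vs \<Longrightarrow> graph (set vs) (edge_of ` set es)"
  unfolding simple_edge_list_def graph_def edge_of_def by auto

lemma cubic_of_simple_edge_list:
  assumes "simple_edge_list es vs" "\<forall>v\<in>set vs. list_degree es v = 3"
  shows "cubic (set vs) (edge_of ` set es)"
proof -
  have "\<forall>p\<in>set es. fst p < snd p" "distinct es" using assms(1) by (auto simp: simple_edge_list_def)
  then show ?thesis
    using assms graph_of_simple_edge_list[OF assms(1)] degree_edge_of[of es] by (simp add: cubic_def)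
qed

definition avoiding_walk :: "('a \<times> 'a) list \<Rightarrow> 'a \<times> 'a \<Rightarrow> 'a list \<Rightarrow> bool" where
  "avoiding_walk es e =
     successively (\<lambda>x y. ((x, y) \<in> set es \<or> (y, x) \<in> set es) \<and> (x, y) \<noteq> e \<and> (y, x) \<noteq> e)"

lemma connected_in_avoiding_walk:
  "avoiding_walk es e (x # p) \<Longrightarrow> connected_in (edge_of ` set es - {edge_of e}) x (last (x # p))"
proof (induction p arbitrary: x)
  case Nil
  then show ?case by (simp add: connected_in_def)
next
  case (Cons y p)
  then have step: "(x, y) \<in> set es \<or> (y, x) \<in> set es" "(x, y) \<noteq> e" "(y, x) \<noteq> e"
    and walk: "avoiding_walk es e (y # p)" by (auto simp: avoiding_walk_def)
  have "{x, y} \<in> edge_of ` set es"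
    using step(1) by (metis edge_of_def fst_conv snd_conv image_eqI insert_commute)
  moreover have "{x, y} \<noteq> edge_of e"
    using step(2,3) by (cases e) (auto simp: edge_of_def doubleton_eq_iff)
  ultimately have "adj (edge_of ` set es - {edge_of e}) x y" by (simp add: adj_def)
  with Cons.IH[OF walk] show ?case
    unfolding connected_in_def by (simp add: converse_rtranclp_into_rtranclp)
qed

definition bridgeless_certificate :: "('a \<times> 'a) list \<Rightarrow> 'a list list \<Rightarrow> bool" where
  "bridgeless_certificate es ps = list_all2
     (\<lambda>e p. p \<noteq> [] \<and> hd p = fst e \<and> last p = snd e \<and> avoiding_walk es e p) es ps"

lemma bridgeless_of_certificate:
  assumes "bridgeless_certificate es ps"
  shows "bridgeless (edge_of ` set es)"
  unfolding bridgeless_def is_bridge_def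
proof (intro ballI notI)
  fix e' assume "e' \<in> edge_of ` set es" "e' \<in> edge_of ` set es \<and>
      (\<exists>u v. e' = {u, v} \<and> \<not> connected_in (edge_of ` set es - {e'}) u v)"
  then obtain e u v where e: "e \<in> set es" "e' = edge_of e" and uv: "e' = {u, v}"
    and not_connected: "\<not> connected_in (edge_of ` set es - {e'}) u v" by blast
  obtain i where i: "i < length es" "es ! i = e" using e(1) by (metis in_set_conv_nth)
  have "length ps = length es" using assms unfolding bridgeless_certificate_def by (simp add: list_all2_lengthD)
  then obtain p where p: "p \<noteq> []" "hd p = fst e" "last p = snd e" "avoiding_walk es e p"
    using assms i unfolding bridgeless_certificate_def list_all2_conv_all_nth by metis
  then obtain p' where "p = fst e # p'" by (metis list.collapse)
  then have "connected_in (edge_of ` set es - {e'}) (fst e) (snd e)"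
    using connected_in_avoiding_walk p e by metis
  moreover have "(u = fst e \<and> v = snd e) \<or> (u = snd e \<and> v = fst e)"
    using uv e(2) by (auto simp: edge_of_def doubleton_eq_iff)
  ultimately show False using not_connected connected_in_sym by metis
qed

definition perfect_matching_on :: "'a set \<Rightarrow> 'a set set \<Rightarrow> bool" where
  "perfect_matching_on S F \<longleftrightarrow> (\<forall>e\<in>F. e \<subseteq> S) \<and> (\<forall>v\<in>S. \<exists>!e. e \<in> F \<and> v \<in> e)"

lemma perfect_matching_on_Diff:
  assumes "perfect_matching_on S F" "e \<in> F"
  shows "perfect_matching_on (S - e) (F - {e})"
  unfolding perfect_matching_on_def
proof (intro conjI ballI)
  fix e' assume "e' \<in> F - {e}"
  then show "e' \<subseteq> S - e" using assms unfolding perfect_matching_on_def by blast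
next
  fix v assume "v \<in> S - e"
  then show "\<exists>!e'. e' \<in> F - {e} \<and> v \<in> e'" using assms unfolding perfect_matching_on_def by blast
qed

lemma perfect_matching_on_one_factor:
  assumes "graph V E" "one_factor V E F"
  shows "perfect_matching_on V F"
  unfolding perfect_matching_on_def
proof (intro conjI ballI)
  show "e \<subseteq> V" if "e \<in> F" for e using assms that unfolding graph_def one_factor_def by blast
  fix v assume "v \<in> V"
  then have "card {e \<in> F. v \<in> e} = 1" using assms(2) by (simp add: one_factor_def degree_def)
  then obtain e0 where "{e \<in> F. v \<in> e} = {e0}" by (meson card_1_singletonE)
  then show "\<exists>!e. e \<in> F \<and> v \<in> e" by (auto simp: set_eq_iff)
qed

definition other_end :: "'a \<Rightarrow> 'a \<times> 'a \<Rightarrow> 'a" where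
  "other_end v e = (if fst e = v then snd e else fst e)"

function perfect_matchings :: "('a \<times> 'a) list \<Rightarrow> 'a list \<Rightarrow> ('a \<times> 'a) list list" where
  "perfect_matchings es [] = [[]]"
| "perfect_matchings es (v # vs) = concat (map (\<lambda>e.
     if (fst e = v \<or> snd e = v) \<and> other_end v e \<in> set vs
     then map ((#) e) (perfect_matchings es (remove1 (other_end v e) vs)) else []) es)"
  by pat_completeness auto
termination
  by (relation "measure (\<lambda>(es, vs). length vs)") (auto simp: length_remove1 Suc_le_eq diff_less_Suc)

lemma Cons_in_perfect_matchings:
  assumes "e \<in> set es" "fst e = v \<or> snd e = v" "other_end v e \<in> set vs"
    and "m \<in> set (perfect_matchings es (remove1 (other_end v e) vs))"
  shows "e # m \<in> set (perfect_matchings es (v # vs))"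
  unfolding perfect_matchings.simps set_concat set_map
  by (rule UnionI[OF imageI[OF imageI[OF assms(1)]]]) (use assms(2-4) in simp)

lemma perfect_matchings_subset: "m \<in> set (perfect_matchings es vs) \<Longrightarrow> set m \<subseteq> set es"
proof (induction es vs arbitrary: m rule: perfect_matchings.induct)
  case (2 es v vs)
  then obtain e m' where "e \<in> set es" "m = e # m'" "fst e = v \<or> snd e = v" "other_end v e \<in> set vs"
    "m' \<in> set (perfect_matchings es (remove1 (other_end v e) vs))"
    by (auto split: if_splits)
  with "2.IH" show ?case by auto
qed simp

lemma perfect_matchings_complete:
  "\<forall>p\<in>set es. fst p \<noteq> snd p \<Longrightarrow> distinct vs \<Longrightarrow> F \<subseteq> edge_of ` set es
    \<Longrightarrow> perfect_matching_on (set vs) F \<Longrightarrow> \<exists>m\<in>set (perfect_matchings es vs). edge_of ` set m = F"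
proof (induction es vs arbitrary: F rule: perfect_matchings.induct)
  case (1 es)
  then have "F = {}" by (auto simp: perfect_matching_on_def edge_of_def)
  then show ?case by simp
next
  case (2 es v vs)
  note loopless = "2.prems"(1) and distinct = "2.prems"(2) and edges = "2.prems"(3)
    and matching = "2.prems"(4)
  obtain e0 where e0: "e0 \<in> F" "v \<in> e0" using matching by (auto simp: perfect_matching_on_def)
  then obtain e where e: "e \<in> set es" "e0 = edge_of e" using edges by blast
  define w where "w = other_end v e"
  have v_in_e: "fst e = v \<or> snd e = v" using e e0(2) by (auto simp: edge_of_def)
  have e0_vw: "e0 = {v, w}" "w \<noteq> v"
    using e loopless v_in_e by (auto simp: edge_of_def w_def other_end_def)
  have "e0 \<subseteq> set (v # vs)" using matching e0(1) by (auto simp: perfect_matching_on_def)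
  then have w_in: "w \<in> set vs" using e0_vw by auto
  have "set (remove1 w vs) = set (v # vs) - e0" using distinct e0_vw by auto
  then have matching': "perfect_matching_on (set (remove1 w vs)) (F - {e0})"
    using perfect_matching_on_Diff[OF matching e0(1)] by simp
  have distinct': "distinct (remove1 w vs)" and edges': "F - {e0} \<subseteq> edge_of ` set es"
    using distinct edges by auto
  have cond: "(fst e = v \<or> snd e = v) \<and> other_end v e \<in> set vs" using v_in_e w_in by (simp add: w_def)
  from "2.IH"[OF e(1) cond loopless, folded w_def, OF distinct' edges' matching']
  obtain m where m: "m \<in> set (perfect_matchings es (remove1 w vs))" "edge_of ` set m = F - {e0}"
    by blast
  have "e # m \<in> set (perfect_matchings es (v # vs))"
    using Cons_in_perfect_matchings[OF e(1) v_in_e] w_in m(1) by (simp add: w_def)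
  moreover have "edge_of ` set (e # m) = F" using m(2) e e0(1) by auto
  ultimately show ?case by blast
qed

text \<open>Matchings are turned into characteristic vectors over \<open>es\<close> once, so that counting the
  edges left uncovered by a triple is a single pass over three boolean lists.\<close>

definition membership :: "('a \<times> 'a) list \<Rightarrow> ('a \<times> 'a) list \<Rightarrow> bool list" where
  "membership es m = map (\<lambda>e. e \<in> set m) es"

fun count_uncovered :: "bool list \<Rightarrow> bool list \<Rightarrow> bool list \<Rightarrow> nat" where
  "count_uncovered (a # as) (b # bs) (c # cs) =
     (if a \<or> b \<or> c then count_uncovered as bs cs else Suc (count_uncovered as bs cs))"
| "count_uncovered _ _ _ = 0"

lemma count_uncovered_commute:
  "count_uncovered a b c = count_uncovered b a c"
  "count_uncovered a b c = count_uncovered a c b"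
  by (induction a b c rule: count_uncovered.induct) auto

lemma count_uncovered_membership:
  "count_uncovered (membership es m1) (membership es m2) (membership es m3)
     = length (filter (\<lambda>e. e \<notin> set m1 \<union> set m2 \<union> set m3) es)"
  unfolding membership_def by (induction es) auto

lemma uncovered_edge_of:
  assumes "simple_edge_list es vs" "set m1 \<subseteq> set es" "set m2 \<subseteq> set es" "set m3 \<subseteq> set es"
  shows "uncovered (edge_of ` set es) (edge_of ` set m1) (edge_of ` set m2) (edge_of ` set m3)
       = count_uncovered (membership es m1) (membership es m2) (membership es m3)"
proof -
  let ?U = "filter (\<lambda>e. e \<notin> set m1 \<union> set m2 \<union> set m3) es"
  have inj: "inj_on edge_of (set es)" using assms(1) inj_on_edge_of unfolding simple_edge_list_def by blast
  have "edge_of ` set es - (edge_of ` set m1 \<union> edge_of ` set m2 \<union> edge_of ` set m3)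
      = edge_of ` set ?U"
    using inj_on_image_set_diff[OF inj, of "set es" "set m1 \<union> set m2 \<union> set m3"] assms(2-4)
    by (auto simp: image_Un)
  moreover have "card (edge_of ` set ?U) = card (set ?U)"
    by (rule card_image) (rule inj_on_subset[OF inj], auto)
  moreover have "card (set ?U) = length ?U"
    by (rule distinct_card) (use assms(1) in \<open>simp add: simple_edge_list_def\<close>)
  ultimately show ?thesis unfolding count_uncovered_membership by simp
qed

text \<open>These check a predicate only on the pairs and triples of list positions \<open>i \<le> j (\<le> l)\<close>,
  which suffices for symmetric predicates and saves most of the work.\<close>

fun all_unordered_pairs :: "('a \<Rightarrow> 'a \<Rightarrow> bool) \<Rightarrow> 'a list \<Rightarrow> bool" where
  "all_unordered_pairs Q [] = True"
| "all_unordered_pairs Q (x # xs) = (list_all (Q x) (x # xs) \<and> all_unordered_pairs Q xs)"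

fun all_unordered_triples :: "('a \<Rightarrow> 'a \<Rightarrow> 'a \<Rightarrow> bool) \<Rightarrow> 'a list \<Rightarrow> bool" where
  "all_unordered_triples P [] = True"
| "all_unordered_triples P (x # xs) = (all_unordered_pairs (P x) (x # xs) \<and> all_unordered_triples P xs)"

lemma all_unordered_pairsD:
  "all_unordered_pairs Q xs \<Longrightarrow> y \<in> set xs \<Longrightarrow> z \<in> set xs \<Longrightarrow> Q y z \<or> Q z y"
  by (induction xs) (auto simp: list_all_iff)

lemma all_unordered_triplesD:
  assumes swap12: "\<And>a b c. P a b c = P b a c" and swap23: "\<And>a b c. P a b c = P a c b"
  shows "all_unordered_triples P xs \<Longrightarrow> a \<in> set xs \<Longrightarrow> b \<in> set xs \<Longrightarrow> c \<in> set xs \<Longrightarrow> P a b c"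
proof (induction xs)
  case (Cons x xs)
  then have pairs: "all_unordered_pairs (P x) (x # xs)" by simp
  consider "a = x" | "b = x" | "c = x" | "x \<notin> {a, b, c}" by blast
  then show ?case
  proof cases
    case 1
    then show ?thesis using all_unordered_pairsD[OF pairs, of b c] Cons.prems swap23 by metis
  next
    case 2
    then show ?thesis using all_unordered_pairsD[OF pairs, of a c] Cons.prems swap12 swap23 by metis
  next
    case 3
    then show ?thesis using all_unordered_pairsD[OF pairs, of a b] Cons.prems swap12 swap23 by metis
  next
    case 4
    then show ?thesis using Cons by auto
  qed
qed simp

definition matching_list :: "('a \<times> 'a) list \<Rightarrow> 'a list \<Rightarrow> ('a \<times> 'a) list \<Rightarrow> bool" where
  "matching_list es vs m \<longleftrightarrow> set m \<subseteq> set es \<and> distinct m \<and> (\<forall>v\<in>set vs. list_degree m v = 1)"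

lemma one_factor_of_matching_list:
  assumes "simple_edge_list es vs" "matching_list es vs m"
  shows "one_factor (set vs) (edge_of ` set es) (edge_of ` set m)"
proof -
  have "\<forall>p\<in>set m. fst p < snd p" "distinct m" "set m \<subseteq> set es"
    using assms unfolding matching_list_def simple_edge_list_def by auto
  then show ?thesis using assms(2) degree_edge_of[of m]
    unfolding one_factor_def matching_list_def by auto
qed

lemma one_factor_in_perfect_matchings:
  assumes "simple_edge_list es vs" "one_factor (set vs) (edge_of ` set es) F"
  obtains m where "m \<in> set (perfect_matchings es vs)" "edge_of ` set m = F"
proof -
  have "\<forall>p\<in>set es. fst p \<noteq> snd p" "distinct vs" using assms(1) by (auto simp: simple_edge_list_def)
  moreover have "F \<subseteq> edge_of ` set es" using assms(2) by (simp add: one_factor_def)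
  moreover have "perfect_matching_on (set vs) F"
    using perfect_matching_on_one_factor[OF graph_of_simple_edge_list[OF assms(1)] assms(2)] .
  ultimately show ?thesis using perfect_matchings_complete that by blast
qed

lemma is_mu3_of_certificate:
  assumes es: "simple_edge_list es vs"
    and witness: "matching_list es vs m1" "matching_list es vs m2" "matching_list es vs m3"
      "count_uncovered (membership es m1) (membership es m2) (membership es m3) = k"
    and lower_bound: "all_unordered_triples (\<lambda>a b c. k \<le> count_uncovered a b c)
      (map (membership es) (perfect_matchings es vs))"
  shows "is_mu3 (set vs) (edge_of ` set es) k"
  unfolding is_mu3_def
proof (intro conjI allI impI)
  have "set m1 \<subseteq> set es" "set m2 \<subseteq> set es" "set m3 \<subseteq> set es"
    using witness by (auto simp: matching_list_def)
  then show "\<exists>F1 F2 F3. one_factor (set vs) (edge_of ` set es) F1 \<and> one_factor (set vs) (edge_of ` set es) F2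
      \<and> one_factor (set vs) (edge_of ` set es) F3 \<and> uncovered (edge_of ` set es) F1 F2 F3 = k"
    using one_factor_of_matching_list[OF es witness(1)] one_factor_of_matching_list[OF es witness(2)]
      one_factor_of_matching_list[OF es witness(3)] uncovered_edge_of[OF es] witness(4)
    by (intro exI[of _ "edge_of ` set m1"] exI[of _ "edge_of ` set m2"] exI[of _ "edge_of ` set m3"]) simp
next
  fix F1 F2 F3
  assume "one_factor (set vs) (edge_of ` set es) F1 \<and> one_factor (set vs) (edge_of ` set es) F2
      \<and> one_factor (set vs) (edge_of ` set es) F3"
  then have F: "one_factor (set vs) (edge_of ` set es) F1" "one_factor (set vs) (edge_of ` set es) F2"
      "one_factor (set vs) (edge_of ` set es) F3" by blast+
  obtain m1' where m1': "m1' \<in> set (perfect_matchings es vs)" "F1 = edge_of ` set m1'"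
    using one_factor_in_perfect_matchings[OF es F(1)] by metis
  obtain m2' where m2': "m2' \<in> set (perfect_matchings es vs)" "F2 = edge_of ` set m2'"
    using one_factor_in_perfect_matchings[OF es F(2)] by metis
  obtain m3' where m3': "m3' \<in> set (perfect_matchings es vs)" "F3 = edge_of ` set m3'"
    using one_factor_in_perfect_matchings[OF es F(3)] by metis
  have "k \<le> count_uncovered (membership es m1') (membership es m2') (membership es m3')"
  proof (rule all_unordered_triplesD[OF _ _ lower_bound])
    show "(k \<le> count_uncovered a b c) = (k \<le> count_uncovered b a c)"
      "(k \<le> count_uncovered a b c) = (k \<le> count_uncovered a c b)" for a b c
      by (subst count_uncovered_commute; rule refl)+
  qed (use m1' m2' m3' in simp_all)
  then show "k \<le> uncovered (edge_of ` set es) F1 F2 F3"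
    using uncovered_edge_of[OF es perfect_matchings_subset perfect_matchings_subset perfect_matchings_subset,
        OF m1'(1) m2'(1) m3'(1)] m1'(2) m2'(2) m3'(2) by simp
qed

text \<open>The base graphs are the Petersen graph (\<open>\<mu>\<^sub>3 = 3\<close>); two copies of the Petersen graph minus a
  vertex, joined by three edges between their degree-two vertices (\<open>\<mu>\<^sub>3 = 4\<close>); and the latter
  with the vertices 0 and 3 blown up into triangles (\<open>\<mu>\<^sub>3 = 5\<close>).\<close>

definition petersen_edges :: "(nat \<times> nat) list" where
  "petersen_edges = [(0,1), (0,4), (0,5), (1,2), (1,6), (2,3), (2,7), (3,4), (3,8), (4,9), (5,7), (5,8), (6,8), (6,9), (7,9)]"

definition petersen_walks :: "nat list list" where
  "petersen_walks = [[0, 4, 3, 2, 1], [0, 1, 2, 3, 4], [0, 1, 2, 7, 5], [1, 0, 4, 3, 2], [1, 0, 4, 9, 6], [2, 1, 0, 4, 3], [2, 1, 0, 5, 7], [3, 2, 1, 0, 4], [3, 2, 1, 6, 8], [4, 0, 1, 6, 9], [5, 0, 1, 2, 7], [5, 0, 1, 6, 8], [6, 1, 0, 5, 8], [6, 1, 0, 4, 9], [7, 2, 1, 6, 9]]"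

definition petersen_matchings :: "(nat \<times> nat) list list" where
  "petersen_matchings = [[(0,1), (2,3), (4,9), (5,7), (6,8)], [(0,1), (2,7), (3,4), (5,8), (6,9)], [(0,4), (1,2), (3,8), (5,7), (6,9)]]"

definition petersen_sum_edges :: "(nat \<times> nat) list" where
  "petersen_sum_edges = [(0,1), (0,5), (0,9), (1,2), (1,6), (2,3), (2,7), (3,8), (3,12), (4,6), (4,7), (4,13), (5,7), (5,8), (6,8), (9,10), (9,14), (10,11), (10,15), (11,12), (11,16), (12,17), (13,15), (13,16), (14,16), (14,17), (15,17)]"

definition petersen_sum_walks :: "nat list list" where
  "petersen_sum_walks = [[0, 5, 7, 2, 1], [0, 1, 2, 7, 5], [0, 1, 2, 3, 12, 11, 10, 9], [1, 0, 5, 7, 2], [1, 0, 5, 8, 6], [2, 1, 6, 8, 3], [2, 1, 0, 5, 7], [3, 2, 1, 6, 8], [3, 2, 1, 0, 9, 10, 11, 12], [4, 7, 2, 1, 6], [4, 6, 1, 2, 7], [4, 6, 1, 0, 9, 10, 15, 13], [5, 0, 1, 2, 7], [5, 0, 1, 6, 8], [6, 1, 0, 5, 8], [9, 14, 16, 11, 10], [9, 10, 11, 16, 14], [10, 9, 14, 16, 11], [10, 9, 14, 17, 15], [11, 10, 15, 17, 12], [11, 10, 9, 14, 16], [12, 11, 10, 15, 17], [13, 16, 11, 10, 15], [13, 15, 10, 11, 16], [14, 9, 10, 11, 16], [14, 9, 10, 15, 17], [15, 10, 9, 14, 17]]"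

definition petersen_sum_matchings :: "(nat \<times> nat) list list" where
  "petersen_sum_matchings = [[(0,1), (2,3), (4,13), (5,7), (6,8), (9,10), (11,12), (14,16), (15,17)], [(0,5), (1,2), (3,12), (4,7), (6,8), (9,14), (10,11), (13,16), (15,17)], [(0,9), (1,6), (2,7), (3,12), (4,13), (5,8), (10,15), (11,16), (14,17)]]"

definition petersen_sum_triangles_edges :: "(nat \<times> nat) list" where
  "petersen_sum_triangles_edges = [(0,1), (0,18), (0,19), (1,2), (1,6), (2,3), (2,7), (3,20), (3,21), (4,6), (4,7), (4,13), (5,7), (5,8), (5,18), (6,8), (8,20), (9,10), (9,14), (9,19), (10,11), (10,15), (11,12), (11,16), (12,17), (12,21), (13,15), (13,16), (14,16), (14,17), (15,17), (18,19), (20,21)]"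

definition petersen_sum_triangles_walks :: "nat list list" where
  "petersen_sum_triangles_walks = [[0, 18, 5, 7, 2, 1], [0, 19, 18], [0, 18, 19], [1, 6, 4, 7, 2], [1, 2, 7, 4, 6], [2, 1, 6, 8, 20, 3], [2, 1, 6, 4, 7], [3, 21, 20], [3, 20, 21], [4, 7, 2, 1, 6], [4, 6, 1, 2, 7], [4, 6, 1, 0, 19, 9, 10, 15, 13], [5, 8, 6, 4, 7], [5, 7, 4, 6, 8], [5, 7, 2, 1, 0, 18], [6, 4, 7, 5, 8], [8, 5, 7, 2, 3, 20], [9, 14, 16, 11, 10], [9, 10, 11, 16, 14], [9, 10, 15, 13, 4, 6, 1, 0, 19], [10, 9, 14, 16, 11], [10, 9, 14, 17, 15], [11, 10, 15, 17, 12], [11, 10, 9, 14, 16], [12, 11, 10, 15, 17], [12, 11, 16, 13, 4, 6, 8, 20, 21], [13, 16, 11, 10, 15], [13, 15, 10, 11, 16], [14, 9, 10, 11, 16], [14, 9, 10, 15, 17], [15, 10, 9, 14, 17], [18, 0, 19], [20, 3, 21]]"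

definition petersen_sum_triangles_matchings :: "(nat \<times> nat) list list" where
  "petersen_sum_triangles_matchings = [[(0,1), (2,3), (4,6), (5,7), (8,20), (9,10), (11,16), (12,21), (13,15), (14,17), (18,19)], [(0,1), (2,3), (4,7), (5,18), (6,8), (9,19), (10,15), (11,12), (13,16), (14,17), (20,21)], [(0,18), (1,6), (2,7), (3,20), (4,13), (5,8), (9,19), (10,11), (12,21), (14,16), (15,17)]]"

lemma mu3_realizable_of_certificate:
  fixes es :: "(nat \<times> nat) list"
  assumes es: "simple_edge_list es vs" and cubic: "\<forall>v\<in>set vs. list_degree es v = 3"
    and bridgeless: "bridgeless_certificate es ps"
    and matchings: "list_all (matching_list es vs) ms"
    and witness: "\<exists>m1\<in>set ms. \<exists>m2\<in>set ms. \<exists>m3\<in>set ms.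
      count_uncovered (membership es m1) (membership es m2) (membership es m3) = k"
    and lower_bound: "all_unordered_triples (\<lambda>a b c. k \<le> count_uncovered a b c)
      (map (membership es) (perfect_matchings es vs))"
  shows "mu3_realizable k"
proof -
  obtain m1 m2 m3 where "m1 \<in> set ms" "m2 \<in> set ms" "m3 \<in> set ms"
    and count: "count_uncovered (membership es m1) (membership es m2) (membership es m3) = k"
    using witness by blast
  then have "matching_list es vs m1" "matching_list es vs m2" "matching_list es vs m3"
    using matchings by (simp_all add: list_all_iff)
  then have "is_mu3 (set vs) (edge_of ` set es) k"
    using is_mu3_of_certificate[OF es _ _ _ count lower_bound] by blast
  then show ?thesis
    unfolding mu3_realizable_def
    using cubic_of_simple_edge_list[OF es cubic] bridgeless_of_certificate[OF bridgeless] by blast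
qed

lemma mu3_realizable_3: "mu3_realizable 3"
  by (rule mu3_realizable_of_certificate[of petersen_edges "[0..<10]" petersen_walks petersen_matchings]; code_simp)

lemma mu3_realizable_4: "mu3_realizable 4"
  by (rule mu3_realizable_of_certificate[of petersen_sum_edges "[0..<18]" petersen_sum_walks
        petersen_sum_matchings]; code_simp)

lemma mu3_realizable_5: "mu3_realizable 5"
  by (rule mu3_realizable_of_certificate[of petersen_sum_triangles_edges "[0..<22]"
        petersen_sum_triangles_walks petersen_sum_triangles_matchings]; code_simp)

theorem mainTheorem8:
  fixes k :: nat
  assumes "k \<ge> 3"
  shows "\<exists>(V :: nat set) (E :: nat set set). cubic V E \<and> bridgeless E \<and> mu3 V E = k"
proof -
  have "mu3_realizable k"
    using assms
  proof (induction k rule: less_induct)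
    case (less k)
    show ?case
    proof (cases "k \<le> 5")
      case True
      then have "k = 3 \<or> k = 4 \<or> k = 5" using less.prems by arith
      then show ?thesis using mu3_realizable_3 mu3_realizable_4 mu3_realizable_5 by (elim disjE) simp_all
    next
      case False
      then have "mu3_realizable (3 + (k - 3))"
        by (intro mu3_realizable_add mu3_realizable_3 less.IH) auto
      with False show ?thesis by simp
    qed
  qed
  then obtain V :: "nat set" and E where "cubic V E" "bridgeless E" "is_mu3 V E k"
    unfolding mu3_realizable_def by blast
  then show ?thesis using mu3_eqI by blast
qed

end
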